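(* Let $(p,\mathcal{D})$ be a GNS over an order $\mathcal{O}$, let $\mathcal{F}$ be a fundamental domain associated with $(p,\mathcal{D})$, and let $\Delta=\mathcal{N}\cdot\boldsymbol{\omega}$. Then $(p,\mathcal{D})$ has the finiteness property if and only if for each $a\in R(p,\mathcal{D})$ and each $\alpha\in\Delta$ we have $a+\alpha\in R(p,\mathcal{D})$.
   Context: $\mathbb{K}$ is a number field of degree $k$, $\mathcal{O}$ an order in $\mathbb{K}$ with $\mathbb{Z}$-basis $\omega_1=1,\ldots,\omega_k$, $\boldsymbol{\omega}=(\omega_1,\ldots,\omega_k)$. A GNS over $\mathcal{O}$ is a pair $(p,\mathcal{D})$ with $p\in\mathcal{O}[x]$ monic and $\mathcal{D}\subset\mathcal{O}$ a complete residue system modulo $p(0)$ containing $0$. $R(p,\mathcal{D})$ is the set of $a\in\mathcal{O}[x]$ with $a\equiv\sum_{j=0}^{\ell-1}d_jx^j\pmod p$ for some $\ell\in\mathbb{N}$, $d_j\in\mathcal{D}$; finiteness property means $R(p,\mathcal{D})=\mathcal{O}[x]$. A fundamental domain associated with $(p,\mathcal{D})$ is a bounded set $\mathcal{F}\subset\mathbb{R}^k$ with $\mathbb{R}^k=\mathcal{F}+\mathbb{Z}^k$ disjointly and $\mathcal{D}=\{p(0)\sum_j f_j\omega_j:(f_1,\ldots,f_k)\in\mathcal{F}\}\cap\mathcal{O}$. $\mathcal{N}=\{\mathbf{z}\in\mathbb{Z}^k:\overline{\mathcal{F}}\cap(\overline{\mathcal{F}}+\mathbf{z})\neq\emptyset\}$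 and $\mathcal{N}\cdot\boldsymbol{\omega}=\{\sum_j z_j\omega_j:\mathbf{z}\in\mathcal{N}\}$. *)

theory Defs
  imports "HOL-Analysis.Analysis" "HOL-Computational_Algebra.Polynomial"
begin

text \<open>The number field K (degree k = CARD('n)) is realised inside the complex numbers.
  The order Or is the Z-span of a basis omega indexed by the finite type 'n.\<close>

definition lin_comb :: "('n::finite \<Rightarrow> complex) \<Rightarrow> real^'n \<Rightarrow> complex" where
  "lin_comb \<omega> f = (\<Sum>j\<in>UNIV. complex_of_real (f $ j) * \<omega> j)"

definition int_vecs :: "(real^'n::finite) set" where
  "int_vecs = {z. \<forall>j. z $ j \<in> \<int>}"

definition order_of :: "('n::finite \<Rightarrow> complex) \<Rightarrow> complex set" where
  "order_of \<omega> = lin_comb \<omega> ` int_vecs"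

text \<open>omega is a Z-basis (1 among its elements, Q-linearly independent) of a ring Or;
  then Or is an order in the number field K = Q(Or) of degree CARD('n).\<close>
definition order_basis :: "('n::finite \<Rightarrow> complex) \<Rightarrow> bool" where
  "order_basis \<omega> \<longleftrightarrow>
     (\<exists>i. \<omega> i = 1) \<and>
     (\<forall>c::'n \<Rightarrow> rat. (\<Sum>j\<in>UNIV. of_rat (c j) * \<omega> j) = 0 \<longrightarrow> (\<forall>j. c j = 0)) \<and>
     (\<forall>i j. \<omega> i * \<omega> j \<in> order_of \<omega>)"

definition O_poly :: "complex set \<Rightarrow> complex poly set" where
  "O_poly Or = {a. \<forall>i. coeff a i \<in> Or}"

definition cong_mod_poly :: "complex set \<Rightarrow> complex poly \<Rightarrow> complex poly \<Rightarrow> complex poly \<Rightarrow> bool" where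
  "cong_mod_poly Or p a b \<longleftrightarrow> (\<exists>q\<in>O_poly Or. a - b = q * p)"

definition GNS :: "complex set \<Rightarrow> complex poly \<Rightarrow> complex set \<Rightarrow> bool" where
  "GNS Or p D \<longleftrightarrow> p \<in> O_poly Or \<and> lead_coeff p = 1 \<and> D \<subseteq> Or \<and> 0 \<in> D \<and>
     (\<forall>a\<in>Or. \<exists>!d. d \<in> D \<and> (\<exists>t\<in>Or. a - d = poly p 0 * t))"

definition R_set :: "complex set \<Rightarrow> complex poly \<Rightarrow> complex set \<Rightarrow> complex poly set" where
  "R_set Or p D = {a \<in> O_poly Or. \<exists>(l::nat) (d::nat \<Rightarrow> complex). (\<forall>j<l. d j \<in> D) \<and>
        cong_mod_poly Or p a (\<Sum>j<l. monom (d j) j)}"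

definition finiteness_property :: "complex set \<Rightarrow> complex poly \<Rightarrow> complex set \<Rightarrow> bool" where
  "finiteness_property Or p D \<longleftrightarrow> R_set Or p D = O_poly Or"

definition fundamental_domain ::
  "('n::finite \<Rightarrow> complex) \<Rightarrow> complex poly \<Rightarrow> complex set \<Rightarrow> (real^'n) set \<Rightarrow> bool" where
  "fundamental_domain \<omega> p D F \<longleftrightarrow> bounded F \<and>
     (\<forall>x::real^'n. \<exists>!fz. fst fz \<in> F \<and> snd fz \<in> int_vecs \<and> x = fst fz + snd fz) \<and>
     D = ((\<lambda>f. poly p 0 * lin_comb \<omega> f) ` F) \<inter> order_of \<omega>"

definition Ncal :: "(real^'n::finite) set \<Rightarrow> (real^'n) set" where
  "Ncal F = {z \<in> int_vecs. closure F \<inter> ((\<lambda>x. x + z) ` closure F) \<noteq> {}}"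

definition Delta :: "('n::finite \<Rightarrow> complex) \<Rightarrow> (real^'n) set \<Rightarrow> complex set" where
  "Delta \<omega> F = lin_comb \<omega> ` Ncal F"

end

theory Submission
  imports Defs "HOL-Computational_Algebra.Group_Closure"
begin

text \<open>Since the translates of \<open>closure F\<close> by the integer vectors cover \<open>\<real>\<^sup>k\<close>,
  and two of them meet only if the difference of the translations lies in \<open>\<N>\<close>, the
  translates by the subgroup generated by \<open>\<N>\<close> and those by the remaining integer
  vectors form two disjoint closed sets covering \<open>\<real>\<^sup>k\<close>; by connectedness the second
  family is empty, so \<open>\<N>\<close> generates \<open>\<int>\<^sup>k\<close>. Hence \<open>\<Delta>\<close> generates \<open>\<O>\<close> as a group, and
  as \<open>\<Delta> = -\<Delta>\<close>, invariance of \<open>R(p,\<D>)\<close> under adding constants from \<open>\<Delta>\<close> extends to all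
  constants from \<open>\<O>\<close>. Together with invariance under multiplication by \<open>x\<close> (because
  \<open>0 \<in> \<D>\<close>) this gives \<open>R(p,\<D>) = \<O>[x]\<close> by induction on the polynomial.\<close>

lemma image_group_closure_subset:
  assumes f_diff: "\<And>x y. f (x - y) = f x - f y"
  shows "f ` group_closure S \<subseteq> group_closure (f ` S)"
proof
  have "f 0 = 0"
    using f_diff[of 0 0] by simp
  fix y assume "y \<in> f ` group_closure S"
  then obtain x where "x \<in> group_closure S" "y = f x" by blast
  from \<open>x \<in> group_closure S\<close> have "f x \<in> group_closure (f ` S)"
  proof induction
    case (base s)
    then have "f s \<in> insert 0 (f ` S)"
      using \<open>f 0 = 0\<close> by auto
    then show ?case by (rule group_closure.base)
  next
    case (diff s t)
    then show ?case by (simp add: f_diff group_closure.diff)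
  qed
  with \<open>y = f x\<close> show "y \<in> group_closure (f ` S)" by simp
qed

lemma add_closed_group_closure:
  fixes A \<Delta> :: "'a::ab_group_add set"
  assumes add_in: "\<And>a \<delta>. a \<in> A \<Longrightarrow> \<delta> \<in> \<Delta> \<Longrightarrow> a + \<delta> \<in> A"
    and uminus_in: "\<And>\<delta>. \<delta> \<in> \<Delta> \<Longrightarrow> - \<delta> \<in> \<Delta>"
    and "c \<in> group_closure \<Delta>" and "a \<in> A"
  shows "a + c \<in> A"
proof -
  from \<open>c \<in> group_closure \<Delta>\<close> have "\<forall>a\<in>A. a + c \<in> A \<and> a - c \<in> A"
  proof induction
    case (base s)
    show ?case
    proof
      fix a assume "a \<in> A"
      then show "a + s \<in> A \<and> a - s \<in> A"
        using base add_in[of a s] add_in[of a "- s"] uminus_in[of s] by auto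
    qed
  next
    case (diff s t)
    show ?case
    proof
      fix a assume "a \<in> A"
      then have "a + s - t \<in> A" "a - s + t \<in> A"
        using diff.IH by blast+
      then show "a + (s - t) \<in> A \<and> a - (s - t) \<in> A"
        by (simp_all add: algebra_simps)
    qed
  qed
  with \<open>a \<in> A\<close> show ?thesis by blast
qed

lemma int_vecs_0: "0 \<in> int_vecs"
  by (simp add: int_vecs_def)

lemma int_vecs_add: "x \<in> int_vecs \<Longrightarrow> y \<in> int_vecs \<Longrightarrow> x + y \<in> int_vecs"
  by (auto simp: int_vecs_def)

lemma int_vecs_diff: "x \<in> int_vecs \<Longrightarrow> y \<in> int_vecs \<Longrightarrow> x - y \<in> int_vecs"
  by (auto simp: int_vecs_def)

lemma closed_subset_int_vecs:
  fixes S :: "(real^'n::finite) set"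
  assumes "S \<subseteq> int_vecs"
  shows "closed S"
proof (rule discrete_imp_closed[of 1])
  show "\<forall>x\<in>S. \<forall>y\<in>S. dist y x < 1 \<longrightarrow> y = x"
  proof (intro ballI impI)
    fix x y assume xy: "x \<in> S" "y \<in> S" "dist y x < 1"
    show "y = x"
    proof (rule vec_eq_iff[THEN iffD2], rule allI)
      fix j
      have "\<bar>(y - x) $ j\<bar> \<le> norm (y - x)" by (rule component_le_norm_cart)
      also have "\<dots> < 1" using xy(3) by (simp add: dist_norm)
      finally have less_1: "\<bar>y $ j - x $ j\<bar> < 1" by simp
      have "y $ j - x $ j \<in> \<int>"
        using xy assms by (auto simp: int_vecs_def intro!: Ints_diff)
      then obtain m where m: "y $ j - x $ j = of_int m"
        by (auto elim: Ints_cases)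
      with less_1 have "m = 0" by simp
      with m show "y $ j = x $ j" by simp
    qed
  qed
qed simp

lemma Ncal_subset_int_vecs: "Ncal F \<subseteq> int_vecs"
  by (auto simp: Ncal_def)

lemma uminus_in_Ncal: "z \<in> Ncal F \<Longrightarrow> - z \<in> Ncal F"
  by (force simp: Ncal_def int_vecs_def)

lemma group_closure_Ncal_subset_int_vecs: "group_closure (Ncal F) \<subseteq> int_vecs"
proof
  fix z assume "z \<in> group_closure (Ncal F)"
  then show "z \<in> int_vecs"
    by induction (use Ncal_subset_int_vecs int_vecs_0 int_vecs_diff in auto)
qed

lemma int_vecs_subset_group_closure_Ncal:
  fixes F :: "(real^'n::finite) set"
  assumes "bounded F" and cover: "\<And>x. \<exists>f\<in>F. \<exists>z\<in>int_vecs. x = f + z"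
  shows "int_vecs \<subseteq> group_closure (Ncal F)"
proof
  fix z :: "real^'n" assume z: "z \<in> int_vecs"
  define S where "S = group_closure (Ncal F)"
  define C where "C = closure F"
  define A where "A = (\<Union>s\<in>S. \<Union>c\<in>C. {s + c})"
  define B where "B = (\<Union>s\<in>int_vecs - S. \<Union>c\<in>C. {s + c})"
  have "compact C"
    unfolding C_def using \<open>bounded F\<close> by (rule compact_closure[THEN iffD2])
  have "closed A"
    unfolding A_def S_def
    by (rule closed_compact_sums[OF closed_subset_int_vecs[OF group_closure_Ncal_subset_int_vecs]
          \<open>compact C\<close>])
  moreover have "closed B"
    unfolding B_def
    by (rule closed_compact_sums[OF closed_subset_int_vecs \<open>compact C\<close>]) blast
  moreover have "UNIV \<subseteq> A \<union> B"
  proof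
    fix x :: "real^'n"
    obtain f w where "f \<in> F" "w \<in> int_vecs" "x = w + f"
      using cover[of x] by (auto simp: add.commute)
    with closure_subset show "x \<in> A \<union> B"
      unfolding A_def B_def C_def by blast
  qed
  moreover have "A \<inter> B = {}"
  proof (rule ccontr)
    assume "A \<inter> B \<noteq> {}"
    then obtain s c w c' where "s \<in> S" "c \<in> C" "w \<in> int_vecs" "w \<notin> S" "c' \<in> C"
      and eq: "s + c = w + c'"
      unfolding A_def B_def by blast
    moreover have "c' = c + (s - w)"
      using eq by (simp add: algebra_simps)
    moreover have "s - w \<in> int_vecs"
      using \<open>s \<in> S\<close> \<open>w \<in> int_vecs\<close> group_closure_Ncal_subset_int_vecs int_vecs_diff
      unfolding S_def by blast
    ultimately have "s - w \<in> Ncal F"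
      unfolding Ncal_def C_def by blast
    then have "s - (s - w) \<in> S"
      using \<open>s \<in> S\<close> unfolding S_def by (blast intro: group_closure.diff group_closure.base)
    with \<open>w \<notin> S\<close> show False by simp
  qed
  ultimately have "A = {} \<or> B = {}"
    using connected_closedD[OF connected_UNIV, of A B] by simp
  moreover obtain f0 where "f0 \<in> C"
    using cover[of 0] closure_subset unfolding C_def by blast
  moreover have "0 \<in> S"
    unfolding S_def by simp
  ultimately have "B = {}" and "f0 \<in> C"
    unfolding A_def by blast+
  show "z \<in> S"
  proof (rule ccontr)
    assume "z \<notin> S"
    with z \<open>f0 \<in> C\<close> have "z + f0 \<in> B"
      unfolding B_def by blast
    with \<open>B = {}\<close> show False by simp
  qed
qed

lemma lin_comb_add: "lin_comb \<omega> (x + y) = lin_comb \<omega> x + lin_comb \<omega> y"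
  by (simp add: lin_comb_def distrib_right sum.distrib)

lemma lin_comb_diff: "lin_comb \<omega> (x - y) = lin_comb \<omega> x - lin_comb \<omega> y"
  by (simp add: lin_comb_def left_diff_distrib sum_subtractf)

lemma lin_comb_uminus: "lin_comb \<omega> (- x) = - lin_comb \<omega> x"
  by (simp add: lin_comb_def sum_negf)

lemma zero_in_order_of: "0 \<in> order_of \<omega>"
  unfolding order_of_def by (rule image_eqI[of _ _ 0]) (simp_all add: lin_comb_def int_vecs_0)

lemma order_of_add: "a \<in> order_of \<omega> \<Longrightarrow> b \<in> order_of \<omega> \<Longrightarrow> a + b \<in> order_of \<omega>"
  by (auto simp: order_of_def lin_comb_add[symmetric] intro!: imageI int_vecs_add)

lemma Delta_subset_order_of: "Delta \<omega> F \<subseteq> order_of \<omega>"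
  using Ncal_subset_int_vecs by (auto simp: Delta_def order_of_def)

lemma uminus_in_Delta: "\<alpha> \<in> Delta \<omega> F \<Longrightarrow> - \<alpha> \<in> Delta \<omega> F"
  by (auto simp: Delta_def lin_comb_uminus[symmetric] intro!: imageI uminus_in_Ncal)

lemma order_of_subset_group_closure_Delta:
  fixes F :: "(real^'n::finite) set"
  assumes "bounded F" and "\<And>x. \<exists>f\<in>F. \<exists>z\<in>int_vecs. x = f + z"
  shows "order_of \<omega> \<subseteq> group_closure (Delta \<omega> F)"
proof -
  have "order_of \<omega> \<subseteq> lin_comb \<omega> ` group_closure (Ncal F)"
    unfolding order_of_def using int_vecs_subset_group_closure_Ncal[OF assms] by blast
  also have "\<dots> \<subseteq> group_closure (Delta \<omega> F)"
    unfolding Delta_def by (rule image_group_closure_subset) (rule lin_comb_diff)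
  finally show ?thesis .
qed

lemma add_order_of_const_closed:
  fixes F :: "(real^'n::finite) set" and A :: "complex poly set"
  assumes "bounded F" and "\<And>x. \<exists>f\<in>F. \<exists>z\<in>int_vecs. x = f + z"
    and add_Delta_in: "\<And>a \<alpha>. a \<in> A \<Longrightarrow> \<alpha> \<in> Delta \<omega> F \<Longrightarrow> a + [:\<alpha>:] \<in> A"
    and "a \<in> A" and "\<alpha> \<in> order_of \<omega>"
  shows "a + [:\<alpha>:] \<in> A"
proof (rule add_closed_group_closure[OF _ _ _ \<open>a \<in> A\<close>])
  have "\<alpha> \<in> group_closure (Delta \<omega> F)"
    using order_of_subset_group_closure_Delta[OF assms(1,2)] \<open>\<alpha> \<in> order_of \<omega>\<close> by blast
  then show "[:\<alpha>:] \<in> group_closure ((\<lambda>\<alpha>. [:\<alpha>:]) ` Delta \<omega> F)"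
    using image_group_closure_subset[of "\<lambda>\<alpha>. [:\<alpha>:]" "Delta \<omega> F"] by auto
next
  show "- \<delta> \<in> (\<lambda>\<alpha>. [:\<alpha>:]) ` Delta \<omega> F" if "\<delta> \<in> (\<lambda>\<alpha>. [:\<alpha>:]) ` Delta \<omega> F" for \<delta>
    using that uminus_in_Delta by (auto simp: image_iff)
qed (use add_Delta_in in auto)

lemma fundamental_domain_covers:
  assumes "fundamental_domain \<omega> p D F"
  shows "\<exists>f\<in>F. \<exists>z\<in>int_vecs. x = f + z"
proof -
  obtain fz where "fst fz \<in> F" "snd fz \<in> int_vecs" "x = fst fz + snd fz"
    using assms unfolding fundamental_domain_def by (blast dest: ex1_implies_ex)
  then show ?thesis by blast
qed

lemma pCons_in_O_poly_iff: "pCons c a \<in> O_poly Or \<longleftrightarrow> c \<in> Or \<and> a \<in> O_poly Or"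
proof
  assume "pCons c a \<in> O_poly Or"
  then have "coeff (pCons c a) 0 \<in> Or" "\<forall>i. coeff (pCons c a) (Suc i) \<in> Or"
    unfolding O_poly_def by blast+
  then show "c \<in> Or \<and> a \<in> O_poly Or"
    by (simp add: O_poly_def)
next
  assume "c \<in> Or \<and> a \<in> O_poly Or"
  then have "coeff (pCons c a) i \<in> Or" for i
    by (cases i) (simp_all add: O_poly_def)
  then show "pCons c a \<in> O_poly Or"
    by (simp add: O_poly_def)
qed

lemma add_const_in_O_poly:
  assumes "\<And>x y. x \<in> Or \<Longrightarrow> y \<in> Or \<Longrightarrow> x + y \<in> Or"
    and "a \<in> O_poly Or" and "c \<in> Or"
  shows "a + [:c:] \<in> O_poly Or"
proof (cases a rule: pCons_cases)
  case (pCons a0 a')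
  then show ?thesis
    using assms by (simp add: pCons_in_O_poly_iff)
qed

lemma zero_in_R_set: "0 \<in> Or \<Longrightarrow> 0 \<in> R_set Or p D"
  unfolding R_set_def cong_mod_poly_def O_poly_def
  by (auto intro!: exI[of _ 0])

lemma pCons_zero_in_R_set:
  assumes "0 \<in> Or" and "0 \<in> D" and "a \<in> R_set Or p D"
  shows "pCons 0 a \<in> R_set Or p D"
proof -
  obtain l d q where d: "\<forall>j<l. d j \<in> D" and "q \<in> O_poly Or"
    and q: "a - (\<Sum>j<l. monom (d j) j) = q * p" and "a \<in> O_poly Or"
    using assms(3) by (auto simp: R_set_def cong_mod_poly_def)
  define d' where "d' j = (if j = 0 then 0 else d (j - 1))" for j
  have "\<forall>j<Suc l. d' j \<in> D"
    using d \<open>0 \<in> D\<close> by (auto simp: d'_def)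
  moreover have "(\<Sum>j<Suc l. monom (d' j) j) = pCons 0 (\<Sum>j<l. monom (d j) j)"
  proof -
    have "pCons 0 (\<Sum>j<l. monom (d j) j) = [:0, 1:] * (\<Sum>j<l. monom (d j) j)"
      by simp
    also have "\<dots> = (\<Sum>j<l. [:0, 1:] * monom (d j) j)"
      by (rule sum_distrib_left)
    also have "\<dots> = monom (d' 0) 0 + (\<Sum>j<l. monom (d' (Suc j)) (Suc j))"
      by (simp add: d'_def monom_Suc)
    also have "\<dots> = (\<Sum>j<Suc l. monom (d' j) j)"
      by (rule sum.lessThan_Suc_shift[symmetric])
    finally show ?thesis ..
  qed
  then have "pCons 0 a - (\<Sum>j<Suc l. monom (d' j) j) = pCons 0 q * p"
    using q by simp
  moreover have "pCons 0 q \<in> O_poly Or" "pCons 0 a \<in> O_poly Or"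
    using assms \<open>q \<in> O_poly Or\<close> \<open>a \<in> O_poly Or\<close> by (simp_all add: pCons_in_O_poly_iff)
  ultimately show ?thesis
    unfolding R_set_def cong_mod_poly_def by blast
qed

lemma R_set_eq_O_poly_if_add_const_closed:
  assumes "0 \<in> Or" and "0 \<in> D"
    and add_const_in: "\<And>a c. a \<in> R_set Or p D \<Longrightarrow> c \<in> Or \<Longrightarrow> a + [:c:] \<in> R_set Or p D"
  shows "R_set Or p D = O_poly Or"
proof
  show "R_set Or p D \<subseteq> O_poly Or"
    by (auto simp: R_set_def)
  show "O_poly Or \<subseteq> R_set Or p D"
  proof
    fix a assume "a \<in> O_poly Or"
    then show "a \<in> R_set Or p D"
    proof (induction a rule: pCons_induct)
      case 0
      show ?case using zero_in_R_set[OF \<open>0 \<in> Or\<close>] .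
    next
      case (pCons c a)
      then have "pCons 0 a \<in> R_set Or p D"
        using assms by (simp add: pCons_in_O_poly_iff pCons_zero_in_R_set)
      then show ?case
        using pCons.prems assms add_const_in[of "pCons 0 a" c] by (simp add: pCons_in_O_poly_iff)
    qed
  qed
qed

theorem mainTheorem7:
  fixes \<omega> :: "'n::finite \<Rightarrow> complex"
    and p :: "complex poly" and D :: "complex set" and F :: "(real^'n) set"
  assumes "order_basis \<omega>"
    and "GNS (order_of \<omega>) p D"
    and "fundamental_domain \<omega> p D F"
  shows "finiteness_property (order_of \<omega>) p D \<longleftrightarrow>
    (\<forall>a\<in>R_set (order_of \<omega>) p D. \<forall>\<alpha>\<in>Delta \<omega> F.
        a + [:\<alpha>:] \<in> R_set (order_of \<omega>) p D)"
  (is "_ \<longleftrightarrow> (\<forall>a\<in>?R. \<forall>\<alpha>\<in>?\<Delta>. _)")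
proof
  assume "finiteness_property (order_of \<omega>) p D"
  then show "\<forall>a\<in>?R. \<forall>\<alpha>\<in>?\<Delta>. a + [:\<alpha>:] \<in> ?R"
    using Delta_subset_order_of
    by (auto simp: finiteness_property_def order_of_add intro!: add_const_in_O_poly)
next
  assume "\<forall>a\<in>?R. \<forall>\<alpha>\<in>?\<Delta>. a + [:\<alpha>:] \<in> ?R"
  moreover have "bounded F"
    using assms(3) by (simp add: fundamental_domain_def)
  ultimately have "a + [:\<alpha>:] \<in> ?R" if "a \<in> ?R" "\<alpha> \<in> order_of \<omega>" for a \<alpha>
    using that add_order_of_const_closed fundamental_domain_covers[OF assms(3)] by blast
  moreover have "0 \<in> D"
    using assms(2) by (simp add: GNS_def)
  ultimately show "finiteness_property (order_of \<omega>) p D"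
    unfolding finiteness_property_def
    by (intro R_set_eq_O_poly_if_add_const_closed zero_in_order_of)
qed

end
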